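(* Let $\mathcal{C}\subseteq\{0,1\}^*$ be a full prefix-free codebook, i.e., $\mathcal{C}$ is prefix-free and $\sum_{k\in\mathcal{C}}2^{-|k|}=1$. Let $K$ be a random variable with probability mass function $p_K(k)=2^{-|k|}$ for $k\in\mathcal{C}$. Then $K$ is a randomly-stopped bit sequence.
   Context: $\{0,1\}^*:=\bigcup_{n\ge0}\{0,1\}^n$; for $K\in\{0,1\}^*$, $|K|$ is its length, $K_i$ its $i$-th entry, and $K^{j}=(K_1,\dots,K_j)$. A random $K\in\{0,1\}^*$ is a randomly-stopped bit sequence if $\mathbb{P}(K_n=k_n\mid |K|\ge n,\,K^{n-1}=k^{n-1})=1/2$ for all $n\ge1$ and all $k^n\in\{0,1\}^n$ with $\mathbb{P}(|K|\ge n,\,K^{n-1}=k^{n-1})>0$. *)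

theory Defs
  imports "HOL-Probability.Probability"
begin

text \<open>Bit strings are represented as lists of booleans (False = 0, True = 1).
  For a bit string k, |k| = length k, the i-th entry K_i (1-based) is k ! (i - 1),
  and the prefix K^j is take j k.\<close>

definition prefix_free :: "bool list set \<Rightarrow> bool" where
  "prefix_free C \<longleftrightarrow> (\<forall>k\<in>C. \<forall>k'\<in>C. k \<noteq> k' \<longrightarrow> \<not> prefix k k')"

definition randomly_stopped_bit_sequence :: "bool list pmf \<Rightarrow> bool" where
  "randomly_stopped_bit_sequence K \<longleftrightarrow>
    (\<forall>n::nat. \<forall>kn::bool list. n \<ge> 1 \<longrightarrow> length kn = n \<longrightarrow>
      (let B = {k. length k \<ge> n \<and> take (n - 1) k = take (n - 1) kn};
           A = {k. k ! (n - 1) = kn ! (n - 1)}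
       in measure_pmf.prob K B > 0 \<longrightarrow>
          measure_pmf.prob K (A \<inter> B) / measure_pmf.prob K B = 1 / 2))"

end

theory Submission
  imports Defs
begin

text \<open>For a string q let m(q) be the mass \<open>\<Sum> 2^-|k|\<close> of the codewords extending q.
  Kraft's inequality gives m(q) \<le> 2^-|q|, and if q is not a codeword then
  m(q) = m(q0) + m(q1). Starting from m([]) = 1, these force m(q) = 2^-|q| for every q
  that no codeword strictly precedes. The event conditioned on is "K extends p0 or p1"
  for p = k^(n-1), and its subevent is "K extends p k_n", so the conditional probability
  is m(p k_n) / (m(p0) + m(p1)), which is 1/2 unless the conditioning event is null.\<close>

definition code_mass :: "bool list set \<Rightarrow> bool list \<Rightarrow> real" where
  "code_mass C q = (\<Sum>\<^sub>\<infinity>k\<in>{k\<in>C. prefix q k}. (1/2) ^ length k)"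

lemma prefix_snoc_bit_cases:
  assumes "prefix q k" "k \<noteq> q"
  shows "prefix (q @ [False]) k \<or> prefix (q @ [True]) k"
proof -
  obtain b r where "k = q @ b # r"
    using assms by (metis prefix_def append_Nil2 neq_Nil_conv)
  then show ?thesis by (cases b) auto
qed

lemma prefix_snoc_bit_disjoint: "\<not> (prefix (q @ [False]) k \<and> prefix (q @ [True]) k)"
  by (auto simp: prefix_def)

lemma prefix_snoc_iff:
  "prefix (p @ [x]) k \<longleftrightarrow> length p < length k \<and> take (length p) k = p \<and> k ! length p = x"
proof
  assume "prefix (p @ [x]) k"
  then show "length p < length k \<and> take (length p) k = p \<and> k ! length p = x"
    by (auto simp: prefix_def)
next
  assume "length p < length k \<and> take (length p) k = p \<and> k ! length p = x"
  then have "take (Suc (length p)) k = p @ [x]"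
    by (simp add: take_Suc_conv_app_nth)
  then show "prefix (p @ [x]) k"
    by (metis take_is_prefix)
qed

lemma prefix_free_subset: "prefix_free C \<Longrightarrow> D \<subseteq> C \<Longrightarrow> prefix_free D"
  unfolding prefix_free_def by blast

lemma extensions_split:
  assumes "q \<notin> C"
  shows "{k\<in>C. prefix q k} = {k\<in>C. prefix (q @ [False]) k} \<union> {k\<in>C. prefix (q @ [True]) k}"
  using assms prefix_snoc_bit_cases by (auto dest: append_prefixD)

lemma extensions_eq_empty:
  assumes "prefix_free C" "c \<in> C" "prefix c p"
  shows "{k\<in>C. prefix (p @ [x]) k} = {}"
proof -
  have "c \<noteq> k \<and> prefix c k" if "prefix (p @ [x]) k" for k
    using assms(3) prefix_length_le[OF that] prefix_length_le[OF assms(3)]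
      prefix_order.trans[OF assms(3) append_prefixD[OF that]] by auto
  then show ?thesis
    using assms(1,2) unfolding prefix_free_def by blast
qed

lemma kraft_inequality_bounded:
  assumes "finite F" "prefix_free F" "\<And>k. k \<in> F \<Longrightarrow> prefix q k \<and> length k \<le> length q + N"
  shows "(\<Sum>k\<in>F. (1/2::real) ^ length k) \<le> (1/2) ^ length q"
  using assms
proof (induction N arbitrary: F q)
  case 0
  have "k = q" if "k \<in> F" for k
    using "0.prems"(3)[OF that] by (auto simp: prefix_def)
  then have "F \<subseteq> {q}"
    by blast
  then show ?case
    by (auto simp: subset_singleton_iff)
next
  case (Suc N)
  show ?case
  proof (cases "q \<in> F")
    case True
    then have "F = {q}"
      using Suc.prems unfolding prefix_free_def by auto
    then show ?thesis by simp
  next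
    case False
    define F\<^sub>b where "F\<^sub>b b = {k\<in>F. prefix (q @ [b]) k}" for b
    have bound: "(\<Sum>k\<in>F\<^sub>b b. (1/2::real) ^ length k) \<le> (1/2) ^ length (q @ [b])" for b
    proof (rule Suc.IH)
      show "finite (F\<^sub>b b)"
        using Suc.prems(1) by (simp add: F\<^sub>b_def)
      show "prefix_free (F\<^sub>b b)"
        using Suc.prems(2) by (rule prefix_free_subset) (auto simp: F\<^sub>b_def)
    next
      fix k assume "k \<in> F\<^sub>b b"
      then show "prefix (q @ [b]) k \<and> length k \<le> length (q @ [b]) + N"
        using Suc.prems(3) by (auto simp: F\<^sub>b_def)
    qed
    have split: "F = F\<^sub>b False \<union> F\<^sub>b True"
      using extensions_split[OF False] Suc.prems(3) unfolding F\<^sub>b_def by blast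
    have "(\<Sum>k\<in>F. (1/2::real) ^ length k)
        = (\<Sum>k\<in>F\<^sub>b False. (1/2) ^ length k) + (\<Sum>k\<in>F\<^sub>b True. (1/2) ^ length k)"
      using Suc.prems(1) prefix_snoc_bit_disjoint unfolding split
      by (intro sum.union_disjoint) (auto simp: F\<^sub>b_def)
    also have "\<dots> \<le> (1/2) ^ length q"
      using bound[of False] bound[of True] by simp
    finally show ?thesis .
  qed
qed

lemma kraft_inequality_finite:
  assumes "finite F" "prefix_free F" "\<And>k. k \<in> F \<Longrightarrow> prefix q k"
  shows "(\<Sum>k\<in>F. (1/2::real) ^ length k) \<le> (1/2) ^ length q"
proof (rule kraft_inequality_bounded[OF assms(1,2)])
  fix k assume "k \<in> F"
  then show "prefix q k \<and> length k \<le> length q + Max (length ` F)"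
    using assms(1,3) by (auto intro: trans_le_add2)
qed

lemma kraft_summable:
  assumes "prefix_free C"
  shows "(\<lambda>k. (1/2::real) ^ length k) summable_on C"
proof (rule nonneg_bdd_above_summable_on)
  show "bdd_above (sum (\<lambda>k. (1/2::real) ^ length k) ` {F. F \<subseteq> C \<and> finite F})"
    using kraft_inequality_finite[of _ "[]"] prefix_free_subset[OF assms]
    by (intro bdd_aboveI[of _ 1]) auto
qed simp

lemma code_mass_le:
  assumes "prefix_free C"
  shows "code_mass C q \<le> (1/2) ^ length q"
  unfolding code_mass_def
proof (rule infsum_le_finite_sums)
  show "(\<lambda>k. (1/2::real) ^ length k) summable_on {k\<in>C. prefix q k}"
    using kraft_summable[OF assms] by (rule summable_on_subset_banach) auto
next
  fix F assume "finite F" "F \<subseteq> {k\<in>C. prefix q k}"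
  then show "(\<Sum>k\<in>F. (1/2::real) ^ length k) \<le> (1/2) ^ length q"
    using kraft_inequality_finite prefix_free_subset[OF assms] by blast
qed

lemma code_mass_split:
  assumes "prefix_free C" "q \<notin> C"
  shows "code_mass C q = code_mass C (q @ [False]) + code_mass C (q @ [True])"
  unfolding code_mass_def extensions_split[OF assms(2)]
  using kraft_summable[OF assms(1)] prefix_snoc_bit_disjoint
  by (intro infsum_Un_disjoint) (auto elim: summable_on_subset_banach)

lemma full_codebook_code_mass_eq:
  assumes "prefix_free C" "((\<lambda>k. (1/2::real) ^ length k) has_sum 1) C"
    and "\<forall>c\<in>C. \<not> strict_prefix c q"
  shows "code_mass C q = (1/2) ^ length q"
  using assms(3)
proof (induction q rule: rev_induct)
  case Nil
  then show ?case
    using assms(2) by (simp add: code_mass_def infsumI)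
next
  case (snoc b q)
  have "strict_prefix q (q @ [b])"
    by (simp add: strict_prefix_def)
  then have "q \<notin> C" and "\<forall>c\<in>C. \<not> strict_prefix c q"
    using snoc.prems prefix_order.less_trans by blast+
  then have sum: "code_mass C (q @ [False]) + code_mass C (q @ [True]) = (1/2) ^ length q"
    using snoc.IH code_mass_split[OF assms(1)] by simp
  have half: "(1/2::real) ^ length q = 2 * (1/2) ^ Suc (length q)"
    by simp
  have "code_mass C (q @ [False]) \<le> (1/2) ^ Suc (length q)"
    and "code_mass C (q @ [True]) \<le> (1/2) ^ Suc (length q)"
    using code_mass_le[OF assms(1), of "q @ [False]"] code_mass_le[OF assms(1), of "q @ [True]"]
    by simp_all
  with sum half have "code_mass C (q @ [False]) = (1/2) ^ Suc (length q)"
    and "code_mass C (q @ [True]) = (1/2) ^ Suc (length q)"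
    by linarith+
  then show ?case
    by (cases b) simp_all
qed

lemma code_mass_child_ratio:
  assumes "prefix_free C" "((\<lambda>k. (1/2::real) ^ length k) has_sum 1) C"
    and "code_mass C (p @ [False]) + code_mass C (p @ [True]) > 0"
  shows "code_mass C (p @ [x]) / (code_mass C (p @ [False]) + code_mass C (p @ [True])) = 1/2"
proof (cases "\<exists>c\<in>C. prefix c p")
  case True
  then obtain c where "c \<in> C" "prefix c p"
    by blast
  then have "code_mass C (p @ [b]) = 0" for b
    unfolding code_mass_def extensions_eq_empty[OF assms(1) \<open>c \<in> C\<close> \<open>prefix c p\<close>] by simp
  with assms(3) show ?thesis by simp
next
  case False
  then have full: "code_mass C (p @ [b]) = (1/2) ^ Suc (length p)" for b
    using full_codebook_code_mass_eq[OF assms(1,2)] by (auto simp: strict_prefix_def prefix_snoc)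
  show ?thesis
    unfolding full by simp
qed

lemma measure_pmf_eq_infsum_on_support:
  assumes "(f has_sum 1) C" "\<And>k. k \<in> C \<Longrightarrow> pmf K k = f k"
  shows "measure_pmf.prob K X = infsum f (X \<inter> C)"
proof -
  have prob_eq_infsum: "measure_pmf.prob K Y = infsum (pmf K) Y" for Y
    by (simp add: measure_pmf_conv_infsetsum infsetsum_infsum pmf_abs_summable)
  have "measure_pmf.prob K C = infsum f C"
    unfolding prob_eq_infsum using assms(2) by (rule infsum_cong)
  also have "\<dots> = 1"
    using assms(1) by (rule infsumI)
  finally have "AE k in K. k \<in> C"
    by (simp add: measure_pmf.prob_eq_1)
  then have "measure_pmf.prob K X = measure_pmf.prob K (X \<inter> C)"
    by (intro measure_pmf.finite_measure_eq_AE) auto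
  also have "\<dots> = infsum f (X \<inter> C)"
    unfolding prob_eq_infsum using assms(2) by (intro infsum_cong) auto
  finally show ?thesis .
qed

theorem proposition1:
  fixes C :: "bool list set" and K :: "bool list pmf"
  assumes "prefix_free C"
    and "((\<lambda>k. (1 / 2 :: real) ^ length k) has_sum 1) C"
    and "\<And>k. k \<in> C \<Longrightarrow> pmf K k = (1 / 2) ^ length k"
  shows "randomly_stopped_bit_sequence K"
  unfolding randomly_stopped_bit_sequence_def Let_def
proof (intro allI impI)
  fix n :: nat and kn :: "bool list"
  assume "1 \<le> n" "length kn = n"
  define p where "p = take (n - 1) kn"
  have length_p: "length p = n - 1"
    using \<open>length kn = n\<close> by (simp add: p_def)
  have prob_extensions: "measure_pmf.prob K {k. prefix (p @ [b]) k} = code_mass C (p @ [b])" for b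
  proof -
    have "{k. prefix (p @ [b]) k} \<inter> C = {k\<in>C. prefix (p @ [b]) k}"
      by blast
    then show ?thesis
      by (simp add: measure_pmf_eq_infsum_on_support[OF assms(2,3)] code_mass_def)
  qed
  let ?B = "{k. n \<le> length k \<and> take (n - 1) k = take (n - 1) kn}"
  let ?A = "{k. k ! (n - 1) = kn ! (n - 1)}"
  have B: "?B = {k. prefix (p @ [False]) k} \<union> {k. prefix (p @ [True]) k}"
    unfolding prefix_snoc_iff length_p p_def using \<open>1 \<le> n\<close> \<open>length kn = n\<close> by auto
  have AB: "?A \<inter> ?B = {k. prefix (p @ [kn ! (n - 1)]) k}"
    unfolding prefix_snoc_iff length_p p_def using \<open>1 \<le> n\<close> \<open>length kn = n\<close> by auto
  have prob_B: "measure_pmf.prob K ?B = code_mass C (p @ [False]) + code_mass C (p @ [True])"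
    unfolding B prob_extensions[symmetric] using prefix_snoc_bit_disjoint
    by (intro measure_pmf.finite_measure_Union) auto
  assume "0 < measure_pmf.prob K ?B"
  then show "measure_pmf.prob K (?A \<inter> ?B) / measure_pmf.prob K ?B = 1 / 2"
    unfolding AB prob_B prob_extensions by (rule code_mass_child_ratio[OF assms(1,2)])
qed

end
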